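(* Let $(|B(\lambda)\rangle,\mathcal{M})$ be an $N$-regular quantum scenario with $M_3=\{C_0,C_1\}$. It is a paradox if and only if $\delta(\lambda,C_0)$ and $\delta(\lambda,C_1)$ are each congruent modulo $2\pi$ to an even multiple of $\frac{\pi}{N}$ and $\beta(\lambda,C_0)-\beta(\lambda,C_1)$ is congruent modulo $2\pi$ to an odd multiple of $\frac{\pi}{N}$.
   Context: $\equiv$ is equality modulo $2\pi$; $\oplus$ is addition mod 2. For $\varphi\in\mathbb{R}$, $E_\varphi=\cos\varphi X+\sin\varphi Y$, with $+1$ eigenvector $|\varphi\rangle=\frac{1}{\sqrt2}(|0\rangle+e^{i\varphi}|1\rangle)$ and $-1$ eigenvector $|\varphi+\pi\rangle$; outcomes $+1,-1$ relabelled $0,1$; measurements identified with angles. A measurement scenario $\mathcal{M}=(M_1,M_2,M_3)$ consists of finite sets $M_i\subseteq[0,\pi)$ of angles for qubit $i$; contexts are triples in $M_1\times M_2\times M_3$. For a three-qubit state $|\psi\rangle$, the event $(A,B,C)\to(a,b,c)$ is impossible if $(\langle A+a\pi|\otimes\langle B+b\pi|\otimes\langle C+c\pi|)|\psi\rangle=0$; $(|\psi\rangle,\mathcal{M})$ is a paradox if for every assignment $g$ of outcomes in $\{0,1\}$ to all measurements of $M_1,M_2,M_3$ (as disjoint sets) some context $(A,B,C)$ has $(A,B,C)\to(g(A),g(B),g(C))$ impossible. For $\lambda\in[0,\frac{\pi}{2})$, $|v_\lambda\rangle=\cos\frac{\lambda}{2}|0\rangle+\sin\frac{\lambda}{2}|1\rangle$,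 $|w_\lambda\rangle=\sin\frac{\lambda}{2}|0\rangle+\cos\frac{\lambda}{2}|1\rangle$, $|B(\lambda)\rangle=\frac{1}{\sqrt2}(|00\rangle|v_\lambda\rangle+|11\rangle|w_\lambda\rangle)$. Define modulo $2\pi$: $\beta(\lambda,\varphi)=\varphi-2\arctan\left(\frac{\cos\frac{\lambda}{2}\sin\varphi}{\sin\frac{\lambda}{2}+\cos\frac{\lambda}{2}\cos\varphi}\right)$ and $\delta(\lambda,\varphi)=\beta(\lambda,\varphi+\pi)-\beta(\lambda,\varphi)$. For $|B(\lambda)\rangle$, $(A,B,C)\to(a,b,c)$ is impossible iff $A+B\equiv\beta(\lambda,C+c\pi)+(1\oplus a\oplus b)\pi$. $(|B(\lambda)\rangle,\mathcal{M})$ is maximally impossible if for every $C\in M_3$ and $z\in\{0,1\}$: every $A\in M_1$ admits $B\in M_2$, $a,b$ with $(A,B,C)\to(a,b,z)$ impossible, and every $B\in M_2$ admits $A\in M_1$, $a,b$ with $(A,B,C)\to(a,b,z)$ impossible. Then $|M_1|=|M_2|=:N$; write $M_1=\{A_0,\dots,A_{N-1}\}$, $M_2=\{B_0,\dots,B_{N-1}\}$, $M_3=\{C_0,\dots,C_{n-1}\}$; for each $(j,l,z)$ there is a unique $k=:K(j,l,z)$ with $A_j+B_k-\beta(\lambda,C_l+z\pi)$ an integer multiple of $\pi$, and $r(j,l,z)\in\{0,1\}$ is defined by $A_j+B_{K(j,l,z)}-\beta(\lambda,C_l+z\pi)\equiv r(j,l,z)\pi$. $\Psi_l(z)$ is the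 $\mathbb{Z}_2$-linear system $\{a_j\oplus b_{K(j,l,z)}=r(j,l,z):j=0,\dots,N-1\}$. With $n=2$, maximal rank means for all $z_0,z_1$ the coefficient matrix of $\Psi_0(z_0)\cup\Psi_1(z_1)$ has rank $2N-1$ over $\mathbb{Z}_2$. $N$-regular: maximally impossible and of maximal rank, with $|M_1|=|M_2|=N$ and $M_3=\{C_0,C_1\}$. *)

theory Defs
  imports Complex_Main "HOL-Library.Z2" "Jordan_Normal_Form.DL_Rank"
begin

definition cong2pi :: "real \<Rightarrow> real \<Rightarrow> bool" where
  "cong2pi x y \<longleftrightarrow> (\<exists>k::int. x - y = 2 * pi * of_int k)"

text \<open>Component x of the +1 eigenvector of cos(phi) X + sin(phi) Y
  in the computational basis (False = ket 0, True = ket 1).\<close>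
definition ket :: "real \<Rightarrow> bool \<Rightarrow> complex" where
  "ket phi x = (if x then cis phi else 1) / complex_of_real (sqrt 2)"

type_synonym state3 = "bool \<Rightarrow> bool \<Rightarrow> bool \<Rightarrow> complex"

definition amp3 :: "state3 \<Rightarrow> real \<Rightarrow> real \<Rightarrow> real \<Rightarrow> complex" where
  "amp3 psi al be ga =
     (\<Sum>x\<in>UNIV. \<Sum>y\<in>UNIV. \<Sum>z\<in>UNIV.
        cnj (ket al x) * cnj (ket be y) * cnj (ket ga z) * psi x y z)"

text \<open>Outcome bit a (False = outcome 0 = +1, True = outcome 1 = -1).\<close>
definition outc :: "real \<Rightarrow> bool \<Rightarrow> real" where
  "outc A a = A + of_bool a * pi"

definition impossible :: "state3 \<Rightarrow> real \<Rightarrow> real \<Rightarrow> real \<Rightarrow> bool \<Rightarrow> bool \<Rightarrow> bool \<Rightarrow> bool" where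
  "impossible psi A B C a b c \<longleftrightarrow> amp3 psi (outc A a) (outc B b) (outc C c) = 0"

definition meas_scenario :: "real set \<Rightarrow> real set \<Rightarrow> real set \<Rightarrow> bool" where
  "meas_scenario M1 M2 M3 \<longleftrightarrow>
     finite M1 \<and> finite M2 \<and> finite M3 \<and>
     M1 \<subseteq> {0..<pi} \<and> M2 \<subseteq> {0..<pi} \<and> M3 \<subseteq> {0..<pi}"

text \<open>Outcome assignments to the (disjoint) measurement sets are given by one
  function per qubit.\<close>
definition paradox :: "state3 \<Rightarrow> real set \<Rightarrow> real set \<Rightarrow> real set \<Rightarrow> bool" where
  "paradox psi M1 M2 M3 \<longleftrightarrow>
     (\<forall>g1 g2 g3 :: real \<Rightarrow> bool. \<exists>A\<in>M1. \<exists>B\<in>M2. \<exists>C\<in>M3.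
        impossible psi A B C (g1 A) (g2 B) (g3 C))"

definition vlam :: "real \<Rightarrow> bool \<Rightarrow> complex" where
  "vlam lam z = complex_of_real (if z then sin (lam/2) else cos (lam/2))"

definition wlam :: "real \<Rightarrow> bool \<Rightarrow> complex" where
  "wlam lam z = complex_of_real (if z then cos (lam/2) else sin (lam/2))"

definition Bstate :: "real \<Rightarrow> state3" where
  "Bstate lam x y z =
     (if x \<noteq> y then 0
      else if x then wlam lam z / complex_of_real (sqrt 2)
      else vlam lam z / complex_of_real (sqrt 2))"

text \<open>beta(lambda,phi) modulo 2 pi; when the denominator vanishes the arctan
  term is arctan(+-infinity) = +-pi/2, so 2 arctan = pi modulo 2 pi.\<close>
definition beta :: "real \<Rightarrow> real \<Rightarrow> real" where
  "beta lam phi =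
     (let d = sin (lam/2) + cos (lam/2) * cos phi in
      if d = 0 then phi - pi
      else phi - 2 * arctan (cos (lam/2) * sin phi / d))"

definition delta :: "real \<Rightarrow> real \<Rightarrow> real" where
  "delta lam phi = beta lam (phi + pi) - beta lam phi"

definition max_impossible :: "state3 \<Rightarrow> real set \<Rightarrow> real set \<Rightarrow> real set \<Rightarrow> bool" where
  "max_impossible psi M1 M2 M3 \<longleftrightarrow>
     (\<forall>C\<in>M3. \<forall>z. (\<forall>A\<in>M1. \<exists>B\<in>M2. \<exists>a b. impossible psi A B C a b z) \<and>
                  (\<forall>B\<in>M2. \<exists>A\<in>M1. \<exists>a b. impossible psi A B C a b z))"

definition Cidx :: "real \<Rightarrow> real \<Rightarrow> nat \<Rightarrow> real" where
  "Cidx C0 C1 l = (if l = 0 then C0 else C1)"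

definition Kidx :: "real \<Rightarrow> nat \<Rightarrow> (nat \<Rightarrow> real) \<Rightarrow> (nat \<Rightarrow> real) \<Rightarrow> real \<Rightarrow> real
                    \<Rightarrow> nat \<Rightarrow> nat \<Rightarrow> bool \<Rightarrow> nat" where
  "Kidx lam N A B C0 C1 j l z =
     (THE k. k < N \<and> (\<exists>m::int. A j + B k - beta lam (outc (Cidx C0 C1 l) z) = of_int m * pi))"

text \<open>Coefficient matrix over Z2 of Psi_0(z0) union Psi_1(z1): rows are the 2N
  equations (first those of Psi_0, then those of Psi_1), columns the variables
  a_0..a_{N-1}, b_0..b_{N-1}.\<close>
definition coeff_mat :: "real \<Rightarrow> nat \<Rightarrow> (nat \<Rightarrow> real) \<Rightarrow> (nat \<Rightarrow> real) \<Rightarrow> real \<Rightarrow> real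
                          \<Rightarrow> bool \<Rightarrow> bool \<Rightarrow> bit mat" where
  "coeff_mat lam N A B C0 C1 z0 z1 =
     mat (2*N) (2*N) (\<lambda>(i, c).
       let l = (if i < N then 0 else 1 :: nat);
           j = (if i < N then i else i - N);
           z = (if l = 0 then z0 else z1)
       in if c = j \<or> c = N + Kidx lam N A B C0 C1 j l z then 1 else 0)"

definition max_rank :: "real \<Rightarrow> nat \<Rightarrow> (nat \<Rightarrow> real) \<Rightarrow> (nat \<Rightarrow> real) \<Rightarrow> real \<Rightarrow> real \<Rightarrow> bool" where
  "max_rank lam N A B C0 C1 \<longleftrightarrow>
     (\<forall>z0 z1. vec_space.rank (2*N) (coeff_mat lam N A B C0 C1 z0 z1) = 2*N - 1)"

definition N_regular :: "real \<Rightarrow> nat \<Rightarrow> (nat \<Rightarrow> real) \<Rightarrow> (nat \<Rightarrow> real) \<Rightarrow> real \<Rightarrow> real \<Rightarrow> bool" where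
  "N_regular lam N A B C0 C1 \<longleftrightarrow>
     0 \<le> lam \<and> lam < pi/2 \<and> 1 \<le> N \<and>
     inj_on A {..<N} \<and> inj_on B {..<N} \<and> C0 \<noteq> C1 \<and>
     meas_scenario (A ` {..<N}) (B ` {..<N}) {C0, C1} \<and>
     max_impossible (Bstate lam) (A ` {..<N}) (B ` {..<N}) {C0, C1} \<and>
     max_rank lam N A B C0 C1"

end

theory Submission
  imports Defs
begin

(*
  For B(lambda) the amplitude of (A,B,C) -> (a,b,c) is, up to a nonzero factor,
  e^(i(phi - g)) + e^(-i(phi + theta)), where g = C + c pi, theta = A + B + (a + b) pi and phi
  is the argument of sin(lambda/2) + cos(lambda/2) e^(i g).  So the event is impossible iff
  A + B - beta(lambda, g) = m pi for an integer m that is odd exactly when a = b.  Hence an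
  outcome assignment avoids every impossible event iff, z_l being the outcome of C_l, the
  outcome bits of the A_j and B_k solve the Z_2-system Psi_0(z_0) united with Psi_1(z_1), whose
  right-hand sides are the parities of these integers m.

  Every variable occurs exactly twice in that system, so adding up all equations shows that
  solvability forces the sum of the right-hand sides to vanish; by maximal rank the columns of
  the coefficient matrix span the whole hyperplane of zero-sum vectors, so this condition is
  also sufficient.  Summing A_j + B_K(j) - beta = m_j pi over j, K being a permutation, the
  condition says that N (beta(lambda, C_1 + z_1 pi) - beta(lambda, C_0 + z_0 pi)) / pi is even.
  The scenario is a paradox iff this integer is odd for all four choices of (z_0, z_1), which
  unwinds to the stated conditions on delta and beta.
*)

section \<open>Impossible events of \<open>B(\<lambda>)\<close>\<close>

lemma cis_eq_cis_iff: "cis x = cis y \<longleftrightarrow> (\<exists>k::int. x - y = of_int k * 2 * pi)"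
proof -
  have "cis x = cis y \<longleftrightarrow> cis (x - y) = 1"
    by (metis cis_divide cis_neq_zero divide_self_if eq_divide_eq)
  also have "\<dots> \<longleftrightarrow> cos (x - y) = 1"
  proof
    assume "cos (x - y) = 1"
    moreover have "sin (x - y)^2 + cos (x - y)^2 = 1" by simp
    ultimately show "cis (x - y) = 1" by (simp add: complex_eq_iff)
  qed (simp add: complex_eq_iff)
  also have "\<dots> \<longleftrightarrow> (\<exists>k::int. x - y = of_int k * 2 * pi)" by (rule cos_one_2pi_int)
  finally show ?thesis .
qed

lemma amp3_Bstate:
  "amp3 (Bstate lam) al be ga =
     ((of_real (cos (lam/2)) + cis (-ga) * of_real (sin (lam/2)))
      + cis (-(al + be)) * (of_real (sin (lam/2)) + cis (-ga) * of_real (cos (lam/2)))) / 4"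
proof -
  define h where "h = complex_of_real (sqrt 2)"
  have h2: "h * h = 2" unfolding h_def of_real_mult[symmetric] by simp
  have h4: "h * h * h * h = 4" by (metis h2 mult.assoc numeral_Bit0_eq_double mult_2)
  have ket_cnj: "cnj (ket p x) = (if x then cis (-p) else 1) / h" for p x
    unfolding ket_def h_def by (simp add: cis_cnj)
  have "amp3 (Bstate lam) al be ga =
     ((of_real (cos (lam/2)) + cis (-ga) * of_real (sin (lam/2)))
      + cis (-al) * cis (-be) * (of_real (sin (lam/2)) + cis (-ga) * of_real (cos (lam/2))))
     / (h * h * h * h)"
    unfolding amp3_def UNIV_bool ket_cnj Bstate_def vlam_def wlam_def h_def[symmetric]
    by (simp add: field_simps add_divide_distrib)
  then show ?thesis by (simp add: h4 cis_mult)
qed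

lemma half_angle_bounds:
  assumes "0 \<le> lam" "lam < pi/2"
  shows "cos (lam/2) > 0" "sin (lam/2) \<ge> 0" "sin (lam/2) < cos (lam/2)"
proof -
  show "cos (lam/2) > 0" using assms by (intro cos_gt_zero_pi) auto
  show "sin (lam/2) \<ge> 0" using assms by (intro sin_ge_zero) auto
  have "cos (lam/2 + pi/4) > 0" using assms by (intro cos_gt_zero_pi) auto
  then have "(cos (lam/2) - sin (lam/2)) * (sqrt 2 / 2) > 0"
    by (simp add: cos_add cos_45 sin_45 left_diff_distrib)
  then show "sin (lam/2) < cos (lam/2)"
    by (simp add: zero_less_mult_iff)
qed

lemma beta_polar:
  assumes "0 \<le> lam" "lam < pi/2"
  obtains \<rho> \<phi> where "\<rho> \<noteq> 0"
    "of_real (sin (lam/2)) + of_real (cos (lam/2)) * cis g = complex_of_real \<rho> * cis \<phi>"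
    "beta lam g = g - 2 * \<phi>"
proof -
  let ?c = "cos (lam/2)" and ?s = "sin (lam/2)"
  note sc = half_angle_bounds[OF assms]
  define d where "d = ?s + ?c * cos g"
  show ?thesis
  proof (cases "d = 0")
    case True
    have "sin g \<noteq> 0"
    proof
      assume "sin g = 0"
      then have "cos g = 1 \<or> cos g = -1"
        using sin_cos_squared_add[of g] by (simp add: power2_eq_1_iff)
      then show False using True sc unfolding d_def by auto
    qed
    then have "?c * sin g \<noteq> 0" using sc by simp
    moreover have "?s + ?c * cis g = complex_of_real (?c * sin g) * cis (pi/2)"
      using True by (simp add: complex_eq_iff d_def)
    moreover have "beta lam g = g - 2 * (pi/2)"
      using True by (simp add: beta_def d_def Let_def)
    ultimately show ?thesis by (rule that)
  next
    case False
    define \<phi> where "\<phi> = arctan (?c * sin g / d)"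
    have cos_\<phi>: "cos \<phi> \<noteq> 0" unfolding \<phi>_def by (rule cos_arctan_not_zero)
    have tan_\<phi>: "sin \<phi> / cos \<phi> = ?c * sin g / d" unfolding \<phi>_def by (metis tan_arctan tan_def)
    have "d / cos \<phi> \<noteq> 0" using cos_\<phi> False by simp
    moreover have "?s + ?c * cis g = complex_of_real (d / cos \<phi>) * cis \<phi>"
      using cos_\<phi> tan_\<phi> False by (simp add: complex_eq_iff d_def field_simps)
    moreover have "beta lam g = g - 2 * \<phi>"
      using False by (simp add: beta_def d_def Let_def \<phi>_def)
    ultimately show ?thesis by (rule that)
  qed
qed

lemma impossible_Bstate_iff:
  assumes "0 \<le> lam" "lam < pi/2"
  shows "impossible (Bstate lam) A B C a b z \<longleftrightarrow>
    cong2pi (A + B) (beta lam (outc C z) + of_bool (a = b) * pi)"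
proof -
  define g where "g = outc C z"
  define \<theta> where "\<theta> = outc A a + outc B b"
  obtain \<rho> \<phi> where \<rho>: "\<rho> \<noteq> 0"
    and polar: "of_real (sin (lam/2)) + of_real (cos (lam/2)) * cis g = complex_of_real \<rho> * cis \<phi>"
    and beta: "beta lam g = g - 2 * \<phi>"
    using beta_polar[OF assms] .
  have polar': "of_real (cos (lam/2)) + cis (-g) * of_real (sin (lam/2)) = complex_of_real \<rho> * cis (\<phi> - g)"
  proof -
    have "of_real (cos (lam/2)) + cis (-g) * of_real (sin (lam/2))
        = cis (-g) * (of_real (sin (lam/2)) + of_real (cos (lam/2)) * cis g)"
      by (simp add: algebra_simps cis_mult)
    then show ?thesis unfolding polar by (simp add: cis_mult algebra_simps)
  qed
  have polar_cnj: "of_real (sin (lam/2)) + cis (-g) * of_real (cos (lam/2)) = complex_of_real \<rho> * cis (- \<phi>)"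
  proof -
    have "of_real (sin (lam/2)) + cis (-g) * of_real (cos (lam/2))
        = cnj (of_real (sin (lam/2)) + of_real (cos (lam/2)) * cis g)"
      by (simp add: cis_cnj mult.commute)
    then show ?thesis unfolding polar by (simp add: cis_cnj)
  qed
  have "impossible (Bstate lam) A B C a b z \<longleftrightarrow> cis (\<phi> - g) + cis (- \<phi> - \<theta>) = 0"
    unfolding impossible_def amp3_Bstate g_def[symmetric] \<theta>_def[symmetric] polar' polar_cnj
    using \<rho> by (simp add: cis_mult algebra_simps flip: distrib_left)
  also have "\<dots> \<longleftrightarrow> cis (\<phi> - g) = cis (- \<phi> - \<theta> - pi)"
    by (simp add: eq_neg_iff_add_eq_0[symmetric] minus_cis')
  also have "\<dots> \<longleftrightarrow> (\<exists>k::int. \<theta> - beta lam g + pi = of_int k * 2 * pi)"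
    unfolding cis_eq_cis_iff beta by (simp add: algebra_simps)
  also have "\<dots> \<longleftrightarrow> cong2pi (A + B) (beta lam g + of_bool (a = b) * pi)"
  proof -
    define t :: int where "t = 1 + of_bool (a \<and> b)"
    define y where "y = A + B - (beta lam g + of_bool (a = b) * pi)"
    have "\<theta> - beta lam g + pi = y + of_int t * 2 * pi"
      unfolding \<theta>_def outc_def t_def y_def by (cases a; cases b) (simp_all add: algebra_simps)
    then have "(\<theta> - beta lam g + pi = of_int k * 2 * pi) \<longleftrightarrow> y = 2 * pi * of_int (k - t)" for k
      by (simp add: algebra_simps)
    then show ?thesis
      unfolding cong2pi_def y_def[symmetric] by (metis add_diff_cancel_right')
  qed
  finally show ?thesis unfolding g_def .
qed

lemma impossible_Bstate_iff_pi_multiple: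
  assumes "0 \<le> lam" "lam < pi/2"
  shows "impossible (Bstate lam) A B C a b z \<longleftrightarrow>
    (\<exists>m::int. A + B - beta lam (outc C z) = of_int m * pi \<and> (odd m \<longleftrightarrow> a = b))"
proof -
  define y where "y = A + B - beta lam (outc C z)"
  define e :: int where "e = of_bool (a = b)"
  have "impossible (Bstate lam) A B C a b z \<longleftrightarrow> (\<exists>k::int. y = of_int (2 * k + e) * pi)"
    unfolding impossible_Bstate_iff[OF assms] cong2pi_def y_def e_def
    by (simp add: algebra_simps)
  also have "\<dots> \<longleftrightarrow> (\<exists>m::int. y = of_int m * pi \<and> (odd m \<longleftrightarrow> a = b))"
  proof
    assume "\<exists>k. y = of_int (2 * k + e) * pi"
    then obtain k where "y = of_int (2 * k + e) * pi" ..
    moreover have "odd (2 * k + e) \<longleftrightarrow> a = b" unfolding e_def by simp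
    ultimately show "\<exists>m. y = of_int m * pi \<and> (odd m \<longleftrightarrow> a = b)" by blast
  next
    assume "\<exists>m. y = of_int m * pi \<and> (odd m \<longleftrightarrow> a = b)"
    then obtain m where m: "y = of_int m * pi" "odd m \<longleftrightarrow> a = b" by blast
    then have "even (m - e)" unfolding e_def by auto
    then obtain k where "m = 2 * k + e" by (metis add.commute diff_add_cancel dvdE)
    then show "\<exists>k. y = of_int (2 * k + e) * pi" using m(1) by blast
  qed
  finally show ?thesis unfolding y_def .
qed

section \<open>Multiples of \<open>\<pi>\<close>\<close>

lemma eq_if_diff_multiple_pi:
  fixes x y :: real and m :: int
  assumes "x \<in> {0..<pi}" "y \<in> {0..<pi}" "x - y = of_int m * pi"
  shows "x = y"
proof -
  have "\<bar>of_int m * pi\<bar> < 1 * pi" using assms(1-3) by auto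
  then have "\<bar>real_of_int m\<bar> < 1" by (simp add: abs_mult)
  then have "m = 0" by linarith
  then show ?thesis using assms(3) by simp
qed

lemma ex_cong2pi_parity_iff:
  assumes N: "N > 0" and x: "real N * x = of_int D * pi"
  shows "(\<exists>k::int. cong2pi x (of_int (2 * k + q) * pi / real N)) \<longleftrightarrow> even (D - q)"
proof
  assume "\<exists>k::int. cong2pi x (of_int (2 * k + q) * pi / real N)"
  then obtain k j :: int where "x - of_int (2 * k + q) * pi / real N = 2 * pi * of_int j"
    unfolding cong2pi_def by blast
  then have "real N * x = of_int (2 * (k + int N * j) + q) * pi"
    using N by (simp add: field_simps)
  then have "of_int D * pi = of_int (2 * (k + int N * j) + q) * pi"
    unfolding x .
  then have "D = 2 * (k + int N * j) + q"
    by (simp only: mult_cancel_right of_int_eq_iff pi_neq_zero simp_thms)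
  then show "even (D - q)" by simp
next
  assume "even (D - q)"
  then obtain k where "D = 2 * k + q" by (metis diff_add_cancel evenE)
  then have "real N * x = of_int (2 * k + q) * pi" using x by simp
  then have "x - of_int (2 * k + q) * pi / real N = 2 * pi * of_int 0"
    using N by (simp add: field_simps)
  then show "\<exists>k::int. cong2pi x (of_int (2 * k + q) * pi / real N)"
    unfolding cong2pi_def by blast
qed

lemma all_odd_iff_cong2pi:
  fixes N :: nat and b0 b1 d0 d1 :: real and S :: "bool \<Rightarrow> bool \<Rightarrow> int"
  assumes N: "N \<ge> 1"
    and S: "\<And>z0 z1. of_int (S z0 z1) * pi = real N * ((b1 + of_bool z1 * d1) - (b0 + of_bool z0 * d0))"
  shows "(\<forall>z0 z1. odd (S z0 z1)) \<longleftrightarrow>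
    (\<exists>k::int. cong2pi d0 (of_int (2*k) * pi / real N)) \<and>
    (\<exists>k::int. cong2pi d1 (of_int (2*k) * pi / real N)) \<and>
    (\<exists>k::int. cong2pi (b0 - b1) (of_int (2*k+1) * pi / real N))"
proof -
  define D0 where "D0 = S False False - S True False"
  define D1 where "D1 = S False True - S False False"
  define E where "E = - S False False"
  have D0: "real N * d0 = of_int D0 * pi"
    using S[of False False] S[of True False] unfolding D0_def by (simp add: algebra_simps)
  have D1: "real N * d1 = of_int D1 * pi"
    using S[of False False] S[of False True] unfolding D1_def by (simp add: algebra_simps)
  have E: "real N * (b0 - b1) = of_int E * pi"
    using S[of False False] unfolding E_def by (simp add: algebra_simps)
  have S_pi: "of_int (S z0 z1) * pi = of_int (- E - of_bool z0 * D0 + of_bool z1 * D1) * pi" for z0 z1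
    using S[of z0 z1] D0 D1 E by (cases z0; cases z1; simp add: algebra_simps; linarith)
  have S_lin: "S z0 z1 = - E - of_bool z0 * D0 + of_bool z1 * D1" for z0 z1
    using S_pi[of z0 z1] by (simp only: mult_cancel_right of_int_eq_iff pi_neq_zero simp_thms)
  have "N > 0" using N by simp
  note parity = ex_cong2pi_parity_iff[OF this]
  have "(\<forall>z0 z1. odd (S z0 z1)) \<longleftrightarrow> even D0 \<and> even D1 \<and> odd E"
    unfolding S_lin by (auto simp: all_bool_eq)
  moreover have "(\<exists>k::int. cong2pi d0 (of_int (2*k) * pi / real N)) \<longleftrightarrow> even D0"
    using parity[OF D0, of 0] by simp
  moreover have "(\<exists>k::int. cong2pi d1 (of_int (2*k) * pi / real N)) \<longleftrightarrow> even D1"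
    using parity[OF D1, of 0] by simp
  moreover have "(\<exists>k::int. cong2pi (b0 - b1) (of_int (2*k+1) * pi / real N)) \<longleftrightarrow> odd E"
    using parity[OF E, of 1] by simp
  ultimately show ?thesis by simp
qed

section \<open>Sums and linear systems over \<open>\<int>\<^sub>2\<close>\<close>

lemma of_int_bit: "(of_int m :: bit) = of_bool (odd m)"
proof (cases "even m")
  case True
  then obtain k where "m = 2 * k" by (rule evenE)
  then show ?thesis by simp
next
  case False
  then obtain k where "m = 2 * k + 1" by (rule oddE)
  then show ?thesis by simp
qed

lemma bit_add_eq_of_int_iff:
  "(a + b :: bit) = of_int m \<longleftrightarrow> (odd m \<longleftrightarrow> odd a \<noteq> odd b)"
  unfolding of_int_bit by (cases a; cases b) simp_all

lemma sum_lessThan_add: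
  "(\<Sum>i<m + n. f i) = (\<Sum>i<m. f i) + (\<Sum>j<n. f (m + j))" for f :: "nat \<Rightarrow> 'a::comm_monoid_add"
  by (induction n) (simp_all add: add.assoc)

lemma sum_if_eq_or_eq:
  fixes x :: "nat \<Rightarrow> 'a::semiring_1"
  assumes "p < n" "q < n" "p \<noteq> q"
  shows "(\<Sum>c<n. (if c = p \<or> c = q then 1 else 0) * x c) = x p + x q"
proof -
  have "(\<Sum>c<n. (if c = p \<or> c = q then 1 else 0) * x c)
      = (\<Sum>c<n. (if c = p then x c else 0) + (if c = q then x c else 0))"
    by (rule sum.cong) (use assms in auto)
  also have "\<dots> = x p + x q" using assms by (simp add: sum.distrib)
  finally show ?thesis .
qed

lemma index_mult_mat_vec_sum:
  "M \<in> carrier_mat n m \<Longrightarrow> x \<in> carrier_vec m \<Longrightarrow> i < n \<Longrightarrow>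
    (M *\<^sub>v x) $ i = (\<Sum>c<m. M $$ (i, c) * x $ c)"
  by (simp add: scalar_prod_def atLeast0LessThan)

lemma (in vec_space) zero_sum_span:
  assumes T: "T \<subseteq> carrier_vec n" "\<And>u. u \<in> T \<Longrightarrow> (\<Sum>i<n. u $ i) = 0" and v: "v \<in> span T"
  shows "(\<Sum>i<n. v $ i) = 0"
proof -
  obtain a U where U: "v = lincomb a U" "finite U" "U \<subseteq> T" using v unfolding span_def by auto
  have Uc: "U \<subseteq> carrier_vec n" using U T by auto
  have "(\<Sum>i<n. v $ i) = (\<Sum>i<n. \<Sum>u\<in>U. a u * u $ i)"
    using lincomb_index[OF _ Uc] U by simp
  also have "\<dots> = (\<Sum>u\<in>U. a u * (\<Sum>i<n. u $ i))"
    by (subst sum.swap) (simp add: sum_distrib_left)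
  also have "\<dots> = 0" using U T by (auto intro!: sum.neutral)
  finally show ?thesis .
qed

text \<open>The columns span a subspace of the hyperplane of zero-sum vectors of the same
  dimension \<open>n - 1\<close>, hence all of it.\<close>
lemma (in vec_space) exists_mult_vec_eq_of_rank_pred:
  assumes M: "M \<in> carrier_mat n nc" and rank: "rank M = n - 1" and n: "n \<ge> 1"
    and col_sums: "\<And>c. c < nc \<Longrightarrow> (\<Sum>i<n. M $$ (i, c)) = 0"
    and r: "r \<in> carrier_vec n" and r_sum: "(\<Sum>i<n. r $ i) = 0"
  shows "\<exists>x \<in> carrier_vec nc. M *\<^sub>v x = r"
proof (rule ccontr)
  assume "\<not> ?thesis"
  then have "r \<notin> span (set (cols M))"
    using col_space_eq[OF M] M unfolding col_space_def by auto
  have cols: "set (cols M) \<subseteq> carrier_vec n" "\<And>u. u \<in> set (cols M) \<Longrightarrow> (\<Sum>i<n. u $ i) = 0"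
    using M col_sums by (auto simp: cols_def)
  have "\<exists>S. finite S \<and> maximal S (\<lambda>T. T \<subseteq> set (cols M) \<and> lin_indpt T) \<and> {} \<subseteq> S"
    by (rule maximal_exists_superset[of "set (cols M)"]) (auto simp: lin_dep_def)
  then obtain S where "finite S" and S: "maximal S (\<lambda>T. T \<subseteq> set (cols M) \<and> lin_indpt T)"
    by blast
  then have S_cols: "S \<subseteq> set (cols M)" and "lin_indpt S" unfolding maximal_def by auto
  have "card S = n - 1" using rank_card_indpt[OF M S] rank by simp
  have Sc: "S \<subseteq> carrier_vec n" using S_cols cols(1) by auto
  have "r \<notin> span S" using span_is_monotone[OF S_cols] \<open>r \<notin> span (set (cols M))\<close> by auto
  then have "r \<notin> S" using in_own_span[OF Sc] by auto
  have "lin_indpt (S \<union> {r})"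
    using lin_dep_iff_in_span[OF Sc \<open>lin_indpt S\<close> r \<open>r \<notin> S\<close>] \<open>r \<notin> span S\<close> by simp
  moreover have "card (S \<union> {r}) = n" using \<open>card S = n - 1\<close> \<open>r \<notin> S\<close> \<open>finite S\<close> n by simp
  ultimately have "basis (S \<union> {r})"
    by (intro dim_li_is_basis) (use \<open>finite S\<close> Sc r dim_is_n in auto)
  then have "unit_vec n 0 \<in> span (S \<union> {r})" unfolding basis_def using n by auto
  moreover have "u \<in> S \<union> {r} \<Longrightarrow> (\<Sum>i<n. u $ i) = 0" for u
    using S_cols cols(2) r_sum by auto
  ultimately have "(\<Sum>i<n. unit_vec n 0 $ i) = (0 :: 'a)"
    using zero_sum_span[of "S \<union> {r}"] Sc r by blast
  then show False using n by (simp add: sum.remove[of _ 0])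
qed

section \<open>The systems \<open>\<Psi>\<close> of an \<open>N\<close>-regular scenario\<close>

definition beta_at :: "real \<Rightarrow> real \<Rightarrow> real \<Rightarrow> nat \<Rightarrow> bool \<Rightarrow> real" where
  "beta_at lam C0 C1 l z = beta lam (outc (Cidx C0 C1 l) z)"

text \<open>The integer \<open>m\<close> with \<open>A j + B (K j l z) - beta_at l z = m pi\<close>; the right-hand side
  \<open>r(j,l,z)\<close> of the system \<open>\<Psi>\<^sub>l(z)\<close> is its parity.\<close>
definition pi_mult :: "real \<Rightarrow> nat \<Rightarrow> (nat \<Rightarrow> real) \<Rightarrow> (nat \<Rightarrow> real) \<Rightarrow> real \<Rightarrow> real
                       \<Rightarrow> nat \<Rightarrow> bool \<Rightarrow> nat \<Rightarrow> int" where
  "pi_mult lam N A B C0 C1 l z j =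
     \<lfloor>(A j + B (Kidx lam N A B C0 C1 j l z) - beta_at lam C0 C1 l z) / pi\<rfloor>"

definition Psi_sat :: "real \<Rightarrow> nat \<Rightarrow> (nat \<Rightarrow> real) \<Rightarrow> (nat \<Rightarrow> real) \<Rightarrow> real \<Rightarrow> real
                       \<Rightarrow> nat \<Rightarrow> bool \<Rightarrow> (nat \<Rightarrow> bit) \<Rightarrow> (nat \<Rightarrow> bit) \<Rightarrow> bool" where
  "Psi_sat lam N A B C0 C1 l z a b \<longleftrightarrow>
     (\<forall>j<N. a j + b (Kidx lam N A B C0 C1 j l z) = of_int (pi_mult lam N A B C0 C1 l z j))"

lemma beta_at_eq:
  "beta_at lam C0 C1 l z = beta lam (Cidx C0 C1 l) + of_bool z * delta lam (Cidx C0 C1 l)"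
  by (cases z) (simp_all add: beta_at_def outc_def delta_def)

context
  fixes lam N A B C0 C1
  assumes reg: "N_regular lam N A B C0 C1"
begin

lemma regular_lam: "0 \<le> lam" "lam < pi/2"
  and regular_N: "1 \<le> N"
  and regular_inj: "inj_on A {..<N}" "inj_on B {..<N}"
  and regular_C: "C0 \<noteq> C1"
  and regular_max_impossible: "max_impossible (Bstate lam) (A ` {..<N}) (B ` {..<N}) {C0, C1}"
  and regular_max_rank: "max_rank lam N A B C0 C1"
  using reg unfolding N_regular_def by simp_all

lemma regular_angles: "j < N \<Longrightarrow> A j \<in> {0..<pi}" "j < N \<Longrightarrow> B j \<in> {0..<pi}"
  using reg unfolding N_regular_def meas_scenario_def by auto

lemma Kidx_exists_unique:
  assumes "j < N"
  shows "\<exists>!k. k < N \<and> (\<exists>m::int. A j + B k - beta_at lam C0 C1 l z = of_int m * pi)"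
proof (rule ex_ex1I)
  have "Cidx C0 C1 l \<in> {C0, C1}" by (simp add: Cidx_def)
  then obtain k a b where "k < N" "impossible (Bstate lam) (A j) (B k) (Cidx C0 C1 l) a b z"
    using regular_max_impossible assms unfolding max_impossible_def by blast
  then show "\<exists>k. k < N \<and> (\<exists>m::int. A j + B k - beta_at lam C0 C1 l z = of_int m * pi)"
    unfolding impossible_Bstate_iff_pi_multiple[OF regular_lam(1,2)] beta_at_def by blast
next
  fix k k'
  assume k: "k < N \<and> (\<exists>m::int. A j + B k - beta_at lam C0 C1 l z = of_int m * pi)"
    and k': "k' < N \<and> (\<exists>m::int. A j + B k' - beta_at lam C0 C1 l z = of_int m * pi)"
  then obtain m m' :: int where "A j + B k - beta_at lam C0 C1 l z = of_int m * pi"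
    "A j + B k' - beta_at lam C0 C1 l z = of_int m' * pi" by blast
  then have "B k - B k' = of_int (m - m') * pi" by (simp add: algebra_simps)
  with k k' have "B k = B k'" by (blast intro: eq_if_diff_multiple_pi regular_angles)
  with k k' show "k = k'" using regular_inj(2) by (auto dest: inj_onD)
qed

lemma Kidx_less: "j < N \<Longrightarrow> Kidx lam N A B C0 C1 j l z < N"
  and pi_mult_eq: "j < N \<Longrightarrow>
    A j + B (Kidx lam N A B C0 C1 j l z) - beta_at lam C0 C1 l z = of_int (pi_mult lam N A B C0 C1 l z j) * pi"
proof -
  assume "j < N"
  then obtain m :: int where
    "Kidx lam N A B C0 C1 j l z < N"
    "A j + B (Kidx lam N A B C0 C1 j l z) - beta_at lam C0 C1 l z = of_int m * pi"
    using theI'[OF Kidx_exists_unique[OF \<open>j < N\<close>, of l z, unfolded beta_at_def]]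
    unfolding Kidx_def beta_at_def by blast
  then show "Kidx lam N A B C0 C1 j l z < N"
    "A j + B (Kidx lam N A B C0 C1 j l z) - beta_at lam C0 C1 l z = of_int (pi_mult lam N A B C0 C1 l z j) * pi"
    unfolding pi_mult_def by simp_all
qed

lemma Kidx_pi_mult_unique:
  assumes "j < N" "k < N" "A j + B k - beta_at lam C0 C1 l z = of_int m * pi"
  shows "k = Kidx lam N A B C0 C1 j l z" "m = pi_mult lam N A B C0 C1 l z j"
proof -
  show k: "k = Kidx lam N A B C0 C1 j l z"
    using Kidx_exists_unique[OF assms(1), of l z] Kidx_less[OF assms(1), of l z]
      pi_mult_eq[OF assms(1), of l z] assms(2,3) by blast
  show "m = pi_mult lam N A B C0 C1 l z j"
    using pi_mult_eq[OF assms(1), of l z] assms(3) unfolding k[symmetric] by simp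
qed

lemma bij_betw_Kidx: "bij_betw (\<lambda>j. Kidx lam N A B C0 C1 j l z) {..<N} {..<N}"
proof -
  have "inj_on (\<lambda>j. Kidx lam N A B C0 C1 j l z) {..<N}"
  proof (rule inj_onI)
    fix j j' assume j: "j \<in> {..<N}" "j' \<in> {..<N}"
      and same: "Kidx lam N A B C0 C1 j l z = Kidx lam N A B C0 C1 j' l z"
    have "A j - A j' = of_int (pi_mult lam N A B C0 C1 l z j - pi_mult lam N A B C0 C1 l z j') * pi"
      using pi_mult_eq[of j l z] pi_mult_eq[of j' l z] j same by (simp add: algebra_simps)
    with j have "A j = A j'" by (blast intro: eq_if_diff_multiple_pi regular_angles)
    with j show "j = j'" using regular_inj(1) by (auto dest: inj_onD)
  qed
  moreover have "(\<lambda>j. Kidx lam N A B C0 C1 j l z) ` {..<N} \<subseteq> {..<N}"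
    using Kidx_less by auto
  ultimately show ?thesis
    unfolding bij_betw_def using endo_inj_surj by blast
qed

lemma impossible_iff_Kidx:
  assumes j: "j < N" and k: "k < N"
  shows "impossible (Bstate lam) (A j) (B k) (Cidx C0 C1 l) a b z \<longleftrightarrow>
    k = Kidx lam N A B C0 C1 j l z \<and> (odd (pi_mult lam N A B C0 C1 l z j) \<longleftrightarrow> a = b)"
proof
  assume "impossible (Bstate lam) (A j) (B k) (Cidx C0 C1 l) a b z"
  then obtain m :: int where m: "A j + B k - beta_at lam C0 C1 l z = of_int m * pi"
    and parity: "odd m \<longleftrightarrow> a = b"
    unfolding impossible_Bstate_iff_pi_multiple[OF regular_lam(1,2)] beta_at_def by blast
  show "k = Kidx lam N A B C0 C1 j l z \<and> (odd (pi_mult lam N A B C0 C1 l z j) \<longleftrightarrow> a = b)"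
    using Kidx_pi_mult_unique[OF j k m] parity by simp
next
  assume "k = Kidx lam N A B C0 C1 j l z \<and> (odd (pi_mult lam N A B C0 C1 l z j) \<longleftrightarrow> a = b)"
  then show "impossible (Bstate lam) (A j) (B k) (Cidx C0 C1 l) a b z"
    unfolding impossible_Bstate_iff_pi_multiple[OF regular_lam(1,2)] using pi_mult_eq[OF j, of l z]
    unfolding beta_at_def by blast
qed

lemma Psi_sat_iff_not_impossible:
  "Psi_sat lam N A B C0 C1 l z a b \<longleftrightarrow>
    (\<forall>j<N. \<forall>k<N. \<not> impossible (Bstate lam) (A j) (B k) (Cidx C0 C1 l) (odd (a j)) (odd (b k)) z)"
proof -
  have "(\<forall>k<N. \<not> impossible (Bstate lam) (A j) (B k) (Cidx C0 C1 l) (odd (a j)) (odd (b k)) z) \<longleftrightarrow>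
      a j + b (Kidx lam N A B C0 C1 j l z) = of_int (pi_mult lam N A B C0 C1 l z j)" if j: "j < N" for j
    unfolding bit_add_eq_of_int_iff using Kidx_less[OF j] by (auto simp: impossible_iff_Kidx[OF j])
  then show ?thesis unfolding Psi_sat_def by auto
qed

lemma not_paradox_iff_Psi_solvable:
  "\<not> paradox (Bstate lam) (A ` {..<N}) (B ` {..<N}) {C0, C1} \<longleftrightarrow>
    (\<exists>z0 z1 a b. Psi_sat lam N A B C0 C1 0 z0 a b \<and> Psi_sat lam N A B C0 C1 1 z1 a b)"
proof
  assume "\<not> paradox (Bstate lam) (A ` {..<N}) (B ` {..<N}) {C0, C1}"
  then obtain g1 g2 g3 where "\<forall>x\<in>A ` {..<N}. \<forall>y\<in>B ` {..<N}. \<forall>C\<in>{C0, C1}.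
      \<not> impossible (Bstate lam) x y C (g1 x) (g2 y) (g3 C)"
    unfolding paradox_def by blast
  then have possible: "\<And>j k C. j < N \<Longrightarrow> k < N \<Longrightarrow> C \<in> {C0, C1} \<Longrightarrow>
      \<not> impossible (Bstate lam) (A j) (B k) C (g1 (A j)) (g2 (B k)) (g3 C)"
    by auto
  have "Psi_sat lam N A B C0 C1 l (g3 (Cidx C0 C1 l)) (\<lambda>j. of_bool (g1 (A j))) (\<lambda>k. of_bool (g2 (B k)))"
    for l
    unfolding Psi_sat_iff_not_impossible by (simp add: possible Cidx_def)
  then show "\<exists>z0 z1 a b. Psi_sat lam N A B C0 C1 0 z0 a b \<and> Psi_sat lam N A B C0 C1 1 z1 a b"
    by blast
next
  assume "\<exists>z0 z1 a b. Psi_sat lam N A B C0 C1 0 z0 a b \<and> Psi_sat lam N A B C0 C1 1 z1 a b"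
  then obtain z0 z1 a b where
    sat0: "Psi_sat lam N A B C0 C1 0 z0 a b" and sat1: "Psi_sat lam N A B C0 C1 1 z1 a b"
    by blast
  define g1 where "g1 x = odd (a (inv_into {..<N} A x))" for x
  define g2 where "g2 x = odd (b (inv_into {..<N} B x))" for x
  define g3 where "g3 x = (if x = C0 then z0 else z1)" for x
  have g1: "g1 (A j) = odd (a j)" and g2: "g2 (B j) = odd (b j)" if "j < N" for j
    using regular_inj that unfolding g1_def g2_def by (simp_all add: inv_into_f_f)
  have possible: "\<not> impossible (Bstate lam) (A j) (B k) C (g1 (A j)) (g2 (B k)) (g3 C)"
    if "j < N" "k < N" "C \<in> {C0, C1}" for j k C
  proof -
    have "C = Cidx C0 C1 0 \<and> g3 C = z0 \<or> C = Cidx C0 C1 1 \<and> g3 C = z1"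
      using that(3) regular_C by (auto simp: g3_def Cidx_def)
    then show ?thesis
      using sat0 sat1 that(1,2) unfolding Psi_sat_iff_not_impossible g1[OF that(1)] g2[OF that(2)]
      by blast
  qed
  have "\<forall>x\<in>A ` {..<N}. \<forall>y\<in>B ` {..<N}. \<forall>C\<in>{C0, C1}.
      \<not> impossible (Bstate lam) x y C (g1 x) (g2 y) (g3 C)"
    using possible by blast
  then show "\<not> paradox (Bstate lam) (A ` {..<N}) (B ` {..<N}) {C0, C1}"
    unfolding paradox_def by blast
qed

lemma Psi_sat_sum:
  assumes "Psi_sat lam N A B C0 C1 l z a b"
  shows "(\<Sum>j<N. a j) + (\<Sum>k<N. b k) = of_int (\<Sum>j<N. pi_mult lam N A B C0 C1 l z j)"
proof -
  have "of_int (\<Sum>j<N. pi_mult lam N A B C0 C1 l z j) = (\<Sum>j<N. a j + b (Kidx lam N A B C0 C1 j l z))"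
    using assms unfolding Psi_sat_def by simp
  also have "\<dots> = (\<Sum>j<N. a j) + (\<Sum>j<N. b (Kidx lam N A B C0 C1 j l z))"
    by (rule sum.distrib)
  also have "(\<Sum>j<N. b (Kidx lam N A B C0 C1 j l z)) = (\<Sum>k<N. b k)"
    by (rule sum.reindex_bij_betw[OF bij_betw_Kidx])
  finally show ?thesis ..
qed

lemma Psi_solvable_imp_even:
  assumes "Psi_sat lam N A B C0 C1 0 z0 a b" "Psi_sat lam N A B C0 C1 1 z1 a b"
  shows "even ((\<Sum>j<N. pi_mult lam N A B C0 C1 0 z0 j) - (\<Sum>j<N. pi_mult lam N A B C0 C1 1 z1 j))"
proof -
  have "(of_int ((\<Sum>j<N. pi_mult lam N A B C0 C1 0 z0 j) - (\<Sum>j<N. pi_mult lam N A B C0 C1 1 z1 j))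
      :: bit) = 0"
    unfolding of_int_diff Psi_sat_sum[OF assms(1), symmetric] Psi_sat_sum[OF assms(2), symmetric]
    by simp
  then show ?thesis unfolding of_int_bit by simp
qed

lemma coeff_mat_carrier: "coeff_mat lam N A B C0 C1 z0 z1 \<in> carrier_mat (2 * N) (2 * N)"
  unfolding coeff_mat_def by simp

lemma coeff_mat_upper:
  "j < N \<Longrightarrow> c < 2 * N \<Longrightarrow> coeff_mat lam N A B C0 C1 z0 z1 $$ (j, c) =
    (if c = j \<or> c = N + Kidx lam N A B C0 C1 j 0 z0 then 1 else 0)"
  and coeff_mat_lower:
  "j < N \<Longrightarrow> c < 2 * N \<Longrightarrow> coeff_mat lam N A B C0 C1 z0 z1 $$ (N + j, c) =
    (if c = j \<or> c = N + Kidx lam N A B C0 C1 j 1 z1 then 1 else 0)"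
  unfolding coeff_mat_def by simp_all

lemma coeff_mat_block_column_sum:
  assumes "c < 2 * N"
  shows "(\<Sum>j<N. (if c = j \<or> c = N + Kidx lam N A B C0 C1 j l z then 1 else 0) :: bit) = 1"
proof (cases "c < N")
  case True
  then have "(\<Sum>j<N. (if c = j \<or> c = N + Kidx lam N A B C0 C1 j l z then 1 else 0) :: bit)
      = (\<Sum>j<N. if c = j then 1 else 0)"
    by (intro sum.cong) auto
  then show ?thesis using True by simp
next
  case False
  then obtain k where k: "c = N + k" "k < N"
    using assms by (metis add_diff_inverse_nat add_less_cancel_left mult_2)
  have "(\<Sum>j<N. (if c = j \<or> c = N + Kidx lam N A B C0 C1 j l z then 1 else 0) :: bit)
      = (\<Sum>j<N. (\<lambda>k'. if k = k' then 1 else 0) (Kidx lam N A B C0 C1 j l z))"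
    by (rule sum.cong) (use k in auto)
  also have "\<dots> = (\<Sum>k'<N. if k = k' then 1 else 0)"
    by (rule sum.reindex_bij_betw[OF bij_betw_Kidx])
  finally show ?thesis using k by simp
qed

lemma coeff_mat_column_sum:
  assumes "c < 2 * N"
  shows "(\<Sum>i<2 * N. coeff_mat lam N A B C0 C1 z0 z1 $$ (i, c)) = 0"
proof -
  have "(\<Sum>i<2 * N. coeff_mat lam N A B C0 C1 z0 z1 $$ (i, c))
      = (\<Sum>j<N. coeff_mat lam N A B C0 C1 z0 z1 $$ (j, c))
        + (\<Sum>j<N. coeff_mat lam N A B C0 C1 z0 z1 $$ (N + j, c))"
    unfolding mult_2 by (rule sum_lessThan_add)
  also have "\<dots> = 1 + 1"
    using assms by (simp add: coeff_mat_upper coeff_mat_lower coeff_mat_block_column_sum)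
  finally show ?thesis by simp
qed

lemma coeff_mat_mult_vec_upper:
  "x \<in> carrier_vec (2 * N) \<Longrightarrow> j < N \<Longrightarrow>
    (coeff_mat lam N A B C0 C1 z0 z1 *\<^sub>v x) $ j = x $ j + x $ (N + Kidx lam N A B C0 C1 j 0 z0)"
  and coeff_mat_mult_vec_lower:
  "x \<in> carrier_vec (2 * N) \<Longrightarrow> j < N \<Longrightarrow>
    (coeff_mat lam N A B C0 C1 z0 z1 *\<^sub>v x) $ (N + j) = x $ j + x $ (N + Kidx lam N A B C0 C1 j 1 z1)"
proof -
  assume x: "x \<in> carrier_vec (2 * N)" and j: "j < N"
  have K: "Kidx lam N A B C0 C1 j l z < N" for l z using Kidx_less[OF j] .
  have "(coeff_mat lam N A B C0 C1 z0 z1 *\<^sub>v x) $ j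
      = (\<Sum>c<2 * N. coeff_mat lam N A B C0 C1 z0 z1 $$ (j, c) * x $ c)"
    by (rule index_mult_mat_vec_sum[OF coeff_mat_carrier x]) (use j in simp)
  also have "\<dots> = (\<Sum>c<2 * N. (if c = j \<or> c = N + Kidx lam N A B C0 C1 j 0 z0 then 1 else 0) * x $ c)"
    using j by (intro sum.cong) (simp_all add: coeff_mat_upper)
  also have "\<dots> = x $ j + x $ (N + Kidx lam N A B C0 C1 j 0 z0)"
    by (rule sum_if_eq_or_eq) (use j K in auto)
  finally show "(coeff_mat lam N A B C0 C1 z0 z1 *\<^sub>v x) $ j = x $ j + x $ (N + Kidx lam N A B C0 C1 j 0 z0)" .
  have "(coeff_mat lam N A B C0 C1 z0 z1 *\<^sub>v x) $ (N + j)
      = (\<Sum>c<2 * N. coeff_mat lam N A B C0 C1 z0 z1 $$ (N + j, c) * x $ c)"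
    by (rule index_mult_mat_vec_sum[OF coeff_mat_carrier x]) (use j in simp)
  also have "\<dots> = (\<Sum>c<2 * N. (if c = j \<or> c = N + Kidx lam N A B C0 C1 j 1 z1 then 1 else 0) * x $ c)"
    using j by (intro sum.cong) (simp_all add: coeff_mat_lower)
  also have "\<dots> = x $ j + x $ (N + Kidx lam N A B C0 C1 j 1 z1)"
    by (rule sum_if_eq_or_eq) (use j K in auto)
  finally show "(coeff_mat lam N A B C0 C1 z0 z1 *\<^sub>v x) $ (N + j) = x $ j + x $ (N + Kidx lam N A B C0 C1 j 1 z1)" .
qed

lemma even_imp_Psi_solvable:
  assumes even: "even ((\<Sum>j<N. pi_mult lam N A B C0 C1 0 z0 j) - (\<Sum>j<N. pi_mult lam N A B C0 C1 1 z1 j))"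
  shows "\<exists>a b. Psi_sat lam N A B C0 C1 0 z0 a b \<and> Psi_sat lam N A B C0 C1 1 z1 a b"
proof -
  define r :: "bit vec" where "r = vec (2 * N) (\<lambda>i.
    if i < N then of_int (pi_mult lam N A B C0 C1 0 z0 i) else of_int (pi_mult lam N A B C0 C1 1 z1 (i - N)))"
  have r: "r \<in> carrier_vec (2 * N)" unfolding r_def by simp
  have "(\<Sum>i<2 * N. r $ i) = (\<Sum>i<N. r $ i) + (\<Sum>j<N. r $ (N + j))"
    unfolding mult_2 by (rule sum_lessThan_add)
  also have "\<dots> = of_int ((\<Sum>j<N. pi_mult lam N A B C0 C1 0 z0 j) - (\<Sum>j<N. pi_mult lam N A B C0 C1 1 z1 j))"
    unfolding r_def by simp
  also have "\<dots> = 0" using even unfolding of_int_bit by simp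
  finally have r_sum: "(\<Sum>i<2 * N. r $ i) = 0" .
  have "vec_space.rank (2 * N) (coeff_mat lam N A B C0 C1 z0 z1) = 2 * N - 1"
    using regular_max_rank unfolding max_rank_def by blast
  then obtain x where x: "x \<in> carrier_vec (2 * N)" and Mx: "coeff_mat lam N A B C0 C1 z0 z1 *\<^sub>v x = r"
    using vec_space.exists_mult_vec_eq_of_rank_pred[OF coeff_mat_carrier _ _
        coeff_mat_column_sum r r_sum] regular_N
    by auto
  have "x $ j + x $ (N + Kidx lam N A B C0 C1 j 0 z0) = of_int (pi_mult lam N A B C0 C1 0 z0 j)"
    if j: "j < N" for j
  proof -
    have "x $ j + x $ (N + Kidx lam N A B C0 C1 j 0 z0) = r $ j"
      unfolding Mx[symmetric] by (rule coeff_mat_mult_vec_upper[OF x j, symmetric])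
    then show ?thesis using j unfolding r_def by simp
  qed
  moreover have "x $ j + x $ (N + Kidx lam N A B C0 C1 j 1 z1) = of_int (pi_mult lam N A B C0 C1 1 z1 j)"
    if j: "j < N" for j
  proof -
    have "x $ j + x $ (N + Kidx lam N A B C0 C1 j 1 z1) = r $ (N + j)"
      unfolding Mx[symmetric] by (rule coeff_mat_mult_vec_lower[OF x j, symmetric])
    then show ?thesis using j unfolding r_def by simp
  qed
  ultimately have "Psi_sat lam N A B C0 C1 0 z0 (\<lambda>j. x $ j) (\<lambda>k. x $ (N + k))"
    "Psi_sat lam N A B C0 C1 1 z1 (\<lambda>j. x $ j) (\<lambda>k. x $ (N + k))"
    unfolding Psi_sat_def by blast+
  then show ?thesis by blast
qed

lemma Psi_solvable_iff_even:
  "(\<exists>a b. Psi_sat lam N A B C0 C1 0 z0 a b \<and> Psi_sat lam N A B C0 C1 1 z1 a b) \<longleftrightarrow>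
    even ((\<Sum>j<N. pi_mult lam N A B C0 C1 0 z0 j) - (\<Sum>j<N. pi_mult lam N A B C0 C1 1 z1 j))"
  using Psi_solvable_imp_even even_imp_Psi_solvable by blast

lemma sum_pi_mult:
  "of_int (\<Sum>j<N. pi_mult lam N A B C0 C1 l z j) * pi =
     (\<Sum>j<N. A j) + (\<Sum>k<N. B k) - real N * beta_at lam C0 C1 l z"
proof -
  have "of_int (\<Sum>j<N. pi_mult lam N A B C0 C1 l z j) * pi
      = (\<Sum>j<N. A j + B (Kidx lam N A B C0 C1 j l z) - beta_at lam C0 C1 l z)"
    by (simp add: sum_distrib_right pi_mult_eq)
  also have "\<dots> = (\<Sum>j<N. A j) + (\<Sum>j<N. B (Kidx lam N A B C0 C1 j l z)) - real N * beta_at lam C0 C1 l z"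
    by (simp add: sum.distrib sum_subtractf)
  also have "(\<Sum>j<N. B (Kidx lam N A B C0 C1 j l z)) = (\<Sum>k<N. B k)"
    by (rule sum.reindex_bij_betw[OF bij_betw_Kidx])
  finally show ?thesis .
qed

end

theorem lemma19:
  fixes lam :: real and N :: nat and A B :: "nat \<Rightarrow> real" and C0 C1 :: real
  assumes "N_regular lam N A B C0 C1"
  shows "paradox (Bstate lam) (A ` {..<N}) (B ` {..<N}) {C0, C1} \<longleftrightarrow>
           (\<exists>k::int. cong2pi (delta lam C0) (of_int (2*k) * pi / real N)) \<and>
           (\<exists>k::int. cong2pi (delta lam C1) (of_int (2*k) * pi / real N)) \<and>
           (\<exists>k::int. cong2pi (beta lam C0 - beta lam C1) (of_int (2*k+1) * pi / real N))"
proof -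
  define S where "S z0 z1 =
    (\<Sum>j<N. pi_mult lam N A B C0 C1 0 z0 j) - (\<Sum>j<N. pi_mult lam N A B C0 C1 1 z1 j)" for z0 z1
  have "paradox (Bstate lam) (A ` {..<N}) (B ` {..<N}) {C0, C1} \<longleftrightarrow> (\<forall>z0 z1. odd (S z0 z1))"
    using not_paradox_iff_Psi_solvable[OF assms] Psi_solvable_iff_even[OF assms]
    unfolding S_def by blast
  moreover have "of_int (S z0 z1) * pi = real N *
      ((beta lam C1 + of_bool z1 * delta lam C1) - (beta lam C0 + of_bool z0 * delta lam C0))" for z0 z1
    unfolding S_def of_int_diff left_diff_distrib sum_pi_mult[OF assms]
    by (simp add: beta_at_eq Cidx_def algebra_simps)
  ultimately show ?thesis
    using all_odd_iff_cong2pi[OF regular_N[OF assms]] by blast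
qed

end
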